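(* Let $K\subset\mathbb R^m$ be a smooth cone and $h:\mathbb R^n\to\mathbb R^m$ a continuously differentiable $K$-concave function, and let $S=\{x\in\mathbb R^n: h(x)\in K\}$. Then for all $x,u\in S$ with $h(x)=h(u)=0$, $$\operatorname{Ker} h'(x)^*\cap K^\circ=\operatorname{Ker} h'(u)^*\cap K^\circ.$$
   Context: $h$ is $K$-concave if $h((1-\lambda)x+\lambda y)-[(1-\lambda)h(x)+\lambda h(y)]\in K$ for all $x,y\in\mathbb R^n$, $\lambda\in[0,1]$. $h'(x)^*$ is the adjoint of the Jacobian $h'(x)$, $K^\circ$ the polar cone. A cone is regular if it is pointed, closed, convex, with nonempty interior. A regular cone $C$ is smooth if every boundary point of $C$ lies on an extreme ray of $C$ (a ray $\{\lambda x:\lambda\ge0\}$, $x\ne0$, which is a face of $C$) and, for every non-zero point $x$ of any extreme ray, the normal cone $N_C(x)$ has dimension one. *)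

theory Defs
  imports "HOL-Analysis.Analysis"
begin

definition K_concave :: "'m::euclidean_space set \<Rightarrow> ('n::euclidean_space \<Rightarrow> 'm) \<Rightarrow> bool" where
  "K_concave K h \<longleftrightarrow> (\<forall>x y. \<forall>t::real. 0 \<le> t \<and> t \<le> 1 \<longrightarrow>
     h ((1 - t) *\<^sub>R x + t *\<^sub>R y) - ((1 - t) *\<^sub>R h x + t *\<^sub>R h y) \<in> K)"

definition polar_cone :: "'a::euclidean_space set \<Rightarrow> 'a set" where
  "polar_cone K = {y. \<forall>x\<in>K. x \<bullet> y \<le> 0}"

definition normal_cone :: "'a::euclidean_space set \<Rightarrow> 'a \<Rightarrow> 'a set" where
  "normal_cone C x = {v. \<forall>y\<in>C. v \<bullet> (y - x) \<le> 0}"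

definition ray :: "'a::euclidean_space \<Rightarrow> 'a set" where
  "ray x = {c *\<^sub>R x | c::real. 0 \<le> c}"

definition extreme_ray :: "'a::euclidean_space set \<Rightarrow> 'a set \<Rightarrow> bool" where
  "extreme_ray C R \<longleftrightarrow> (\<exists>x. x \<noteq> 0 \<and> R = ray x \<and> R face_of C)"

definition pointed :: "'a::euclidean_space set \<Rightarrow> bool" where
  "pointed C \<longleftrightarrow> C \<inter> uminus ` C \<subseteq> {0}"

definition regular_cone :: "'a::euclidean_space set \<Rightarrow> bool" where
  "regular_cone C \<longleftrightarrow> convex_cone C \<and> pointed C \<and> closed C \<and> interior C \<noteq> {}"

definition smooth_cone :: "'a::euclidean_space set \<Rightarrow> bool" where
  "smooth_cone C \<longleftrightarrow> regular_cone C
     \<and> (\<forall>x\<in>frontier C. \<exists>R. extreme_ray C R \<and> x \<in> R)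
     \<and> (\<forall>R x. extreme_ray C R \<and> x \<in> R \<and> x \<noteq> 0 \<longrightarrow> dim (normal_cone C x) = 1)"

end

theory Submission
  imports Defs
begin

text \<open>For \<open>v \<in> K\<degree>\<close> the scalar function \<open>\<phi> = \<langle>v, h\<rangle>\<close> is convex, because \<open>h\<close> is \<open>K\<close>-concave.
  If \<open>h x = 0\<close> and \<open>h'(x)\<^sup>* v = 0\<close>, then \<open>x\<close> is a stationary point of \<open>\<phi>\<close>, hence a global minimum,
  so \<open>\<phi> \<ge> 0 = \<phi> u\<close> everywhere. Thus \<open>u\<close> is a minimum of \<open>\<phi>\<close> as well, its derivative
  \<open>\<langle>v, h'(u) \<cdot>\<rangle>\<close> vanishes, i.e. \<open>h'(u)\<^sup>* v = 0\<close>.\<close>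

lemma adjoint_eq_0_iff:
  fixes f :: "'n::euclidean_space \<Rightarrow> 'm::euclidean_space"
  assumes "linear f"
  shows "adjoint f v = 0 \<longleftrightarrow> (\<lambda>d. v \<bullet> f d) = (\<lambda>_. 0)"
proof
  assume "adjoint f v = 0"
  then show "(\<lambda>d. v \<bullet> f d) = (\<lambda>_. 0)"
    using adjoint_works[OF assms] by (metis inner_commute inner_zero_right)
next
  assume "(\<lambda>d. v \<bullet> f d) = (\<lambda>_. 0)"
  then have "adjoint f v \<bullet> adjoint f v = 0"
    using adjoint_works[OF assms, of "adjoint f v" v] by (metis inner_commute)
  then show "adjoint f v = 0" by simp
qed

lemma K_concave_imp_convex_on_inner:
  assumes "K_concave K h" and "v \<in> polar_cone K"
  shows "convex_on UNIV (\<lambda>y. v \<bullet> h y)"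
proof (rule convex_onI)
  fix t :: real and p q
  assume "0 < t" "t < 1"
  then have "h ((1 - t) *\<^sub>R p + t *\<^sub>R q) - ((1 - t) *\<^sub>R h p + t *\<^sub>R h q) \<in> K"
    using assms(1) unfolding K_concave_def by simp
  then have "v \<bullet> (h ((1 - t) *\<^sub>R p + t *\<^sub>R q) - ((1 - t) *\<^sub>R h p + t *\<^sub>R h q)) \<le> 0"
    using assms(2) unfolding polar_cone_def by (simp add: inner_commute[of v])
  then show "v \<bullet> h ((1 - t) *\<^sub>R p + t *\<^sub>R q) \<le> (1 - t) * (v \<bullet> h p) + t * (v \<bullet> h q)"
    by (simp add: inner_diff_right inner_add_right)
qed simp

lemma convex_on_stationary_imp_minimum:
  fixes f :: "'a::real_normed_vector \<Rightarrow> real"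
  assumes convex: "convex_on UNIV f" and stationary: "(f has_derivative (\<lambda>_. 0)) (at a)"
  shows "f a \<le> f y"
proof -
  define g where "g s = f (a + s *\<^sub>R (y - a))" for s :: real
  have "convex_on UNIV g"
  proof (rule convex_onI)
    fix t s1 s2 :: real
    assume "0 < t" "t < 1"
    have "a + ((1 - t) *\<^sub>R s1 + t *\<^sub>R s2) *\<^sub>R (y - a)
        = (1 - t) *\<^sub>R (a + s1 *\<^sub>R (y - a)) + t *\<^sub>R (a + s2 *\<^sub>R (y - a))"
      by (simp add: algebra_simps)
    then show "g ((1 - t) *\<^sub>R s1 + t *\<^sub>R s2) \<le> (1 - t) * g s1 + t * g s2"
      unfolding g_def using convex_onD[OF convex, of t] \<open>0 < t\<close> \<open>t < 1\<close> by simp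
  qed simp
  moreover have line: "((\<lambda>s. a + s *\<^sub>R (y - a)) has_derivative (\<lambda>s. s *\<^sub>R (y - a))) (at 0)"
    by (intro derivative_eq_intros) auto
  have "(g has_derivative (\<lambda>_. 0)) (at 0)"
    unfolding g_def using has_derivative_compose[OF line, of f "\<lambda>_. 0"] stationary by simp
  then have "(g has_field_derivative 0) (at 0)"
    by (simp add: has_field_derivative_def mult_zero_left[abs_def])
  ultimately have "g 1 - g 0 \<ge> 0"
    using convex_on_imp_above_tangent[of UNIV g 0 1 0] by simp
  then show ?thesis unfolding g_def by simp
qed

lemma K_concave_adjoint_kernel_transfer:
  fixes K :: "'m::euclidean_space set"
    and h :: "'n::euclidean_space \<Rightarrow> 'm"
    and h' :: "'n \<Rightarrow> ('n \<Rightarrow>\<^sub>L 'm)"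
  assumes deriv: "\<And>x. (h has_derivative blinfun_apply (h' x)) (at x)"
    and "K_concave K h" and "h a = 0" and "h b = 0"
    and "v \<in> polar_cone K"
    and "adjoint (blinfun_apply (h' a)) v = 0"
  shows "adjoint (blinfun_apply (h' b)) v = 0"
proof -
  have linear: "linear (blinfun_apply (h' y))" for y
    by (simp add: bounded_linear.linear blinfun.bounded_linear_right)
  have deriv_inner: "((\<lambda>y. v \<bullet> h y) has_derivative (\<lambda>d. v \<bullet> blinfun_apply (h' y) d)) (at y)" for y
    by (rule has_derivative_inner_right[OF deriv])
  have convex: "convex_on UNIV (\<lambda>y. v \<bullet> h y)"
    using K_concave_imp_convex_on_inner assms(2,5) .
  have "(\<lambda>d. v \<bullet> blinfun_apply (h' a) d) = (\<lambda>_. 0)"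
    using assms(6) adjoint_eq_0_iff[OF linear] by simp
  then have "v \<bullet> h a \<le> v \<bullet> h y" for y
    using convex_on_stationary_imp_minimum[OF convex] deriv_inner[of a] by simp
  then have "eventually (\<lambda>y. v \<bullet> h b \<le> v \<bullet> h y) (at b)"
    using assms(3,4) by simp
  then have "(\<lambda>d. v \<bullet> blinfun_apply (h' b) d) = (\<lambda>_. 0)"
    by (rule has_derivative_local_min[OF deriv_inner])
  then show ?thesis
    using adjoint_eq_0_iff[OF linear] by simp
qed

theorem lemma1:
  fixes K :: "'m::euclidean_space set"
    and h :: "'n::euclidean_space \<Rightarrow> 'm"
    and h' :: "'n \<Rightarrow> ('n \<Rightarrow>\<^sub>L 'm)"
    and S :: "'n set"
  assumes "smooth_cone K"
    and "\<And>x. (h has_derivative blinfun_apply (h' x)) (at x)"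
    and "continuous_on UNIV h'"
    and "K_concave K h"
    and "S = {x. h x \<in> K}"
    and "x \<in> S" and "u \<in> S" and "h x = 0" and "h u = 0"
  shows "{v. adjoint (blinfun_apply (h' x)) v = 0} \<inter> polar_cone K
       = {v. adjoint (blinfun_apply (h' u)) v = 0} \<inter> polar_cone K"
  using K_concave_adjoint_kernel_transfer[OF assms(2,4,8,9)]
    K_concave_adjoint_kernel_transfer[OF assms(2,4,9,8)]
  by blast

end
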